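(* Let $(X,d)$ be a compact metric space and $\mathcal A\subset\mathcal K(X)$ a nonempty set with the finite union property. Then $$\underline{\mathrm{mo}}(\mathcal A,H)\ge\liminf_{\varepsilon\to0}\frac{\log B(\mathcal A,\varepsilon)}{-\log\varepsilon}.$$
   Context: $\mathcal K(X)$ is the space of nonempty closed subsets of $X$ with Hausdorff metric $H$. $\mathcal A$ has the finite union property if $B\cup C\in\mathcal A$ whenever $B,C\in\mathcal A$. $B,C\in\mathcal K(X)$ are $\varepsilon$-split if $\min\{d(x,y):x\in B,y\in C\}>\varepsilon$; $B(\mathcal A,\varepsilon)$ is the maximal number of pairwise $\varepsilon$-split elements of $\mathcal A$. $N(\mathcal A,\varepsilon)$ is the smallest cardinality of $E\subset\mathcal K(X)$ with $\mathcal A$ covered by the $H$-balls of radius $\varepsilon$ centered in $E$, and $\underline{\mathrm{mo}}(\mathcal A,H)=\liminf_{\varepsilon\to0}\frac{\log\log N(\mathcal A,\varepsilon)}{-\log\varepsilon}$. *)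

theory Defs
  imports "HOL-Analysis.Analysis"
begin

text \<open>K(X): nonempty closed subsets of X (X compact, so closed in X = closed).\<close>
definition Kset :: "'a::metric_space set \<Rightarrow> 'a set set" where
  "Kset X = {S. S \<subseteq> X \<and> S \<noteq> {} \<and> closed S}"

definition hausdorff_dist :: "'a::metric_space set \<Rightarrow> 'a set \<Rightarrow> real" where
  "hausdorff_dist S T = max (SUP x\<in>S. infdist x T) (SUP y\<in>T. infdist y S)"

definition eps_split :: "real \<Rightarrow> 'a::metric_space set \<Rightarrow> 'a set \<Rightarrow> bool" where
  "eps_split \<epsilon> B C \<longleftrightarrow> setdist B C > \<epsilon>"

definition finite_union_property :: "'a set set \<Rightarrow> bool" where
  "finite_union_property \<A> \<longleftrightarrow> (\<forall>B\<in>\<A>. \<forall>C\<in>\<A>. B \<union> C \<in> \<A>)"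

definition split_number :: "'a::metric_space set set \<Rightarrow> real \<Rightarrow> nat" where
  "split_number \<A> \<epsilon> = Sup {card \<F> | \<F>. finite \<F> \<and> \<F> \<subseteq> \<A> \<and>
      (\<forall>B\<in>\<F>. \<forall>C\<in>\<F>. B \<noteq> C \<longrightarrow> eps_split \<epsilon> B C)}"

definition covering_number :: "'a::metric_space set \<Rightarrow> 'a set set \<Rightarrow> real \<Rightarrow> nat" where
  "covering_number X \<A> \<epsilon> = Inf {card E | E. finite E \<and> E \<subseteq> Kset X \<and>
      \<A> \<subseteq> (\<Union>C\<in>E. {S. hausdorff_dist S C \<le> \<epsilon>})}"

definition lower_mo :: "'a::metric_space set \<Rightarrow> 'a set set \<Rightarrow> ereal" where
  "lower_mo X \<A> = Liminf (at_right 0)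
     (\<lambda>\<epsilon>. ereal (ln (ln (real (covering_number X \<A> \<epsilon>))) / (- ln \<epsilon>)))"

end

theory Submission
  imports Defs
begin

text \<open>
  Let \<open>\<F>\<close> be a maximal family of pairwise \<open>2\<epsilon>\<close>-split members of \<open>\<A>\<close>, so
  \<open>card \<F> = B(\<A>, 2\<epsilon>)\<close>. By the finite union property the \<open>2 ^ card \<F> - 1\<close> unions of
  nonempty subfamilies of \<open>\<F>\<close> lie in \<open>\<A>\<close>. Two different such unions differ by a member
  of \<open>\<F>\<close> all of whose points are farther than \<open>2\<epsilon>\<close> from the other union, so by the
  triangle inequality for the Hausdorff distance no \<open>\<epsilon>\<close>-ball contains both of them. Hence
  \<open>N(\<A>, \<epsilon>) \<ge> 2 ^ B(\<A>, 2\<epsilon>) - 1\<close>, i.e. \<open>ln (ln N(\<A>, \<epsilon>)) \<ge> ln B(\<A>, 2\<epsilon>) - c\<close>; after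
  division by \<open>- ln \<epsilon>\<close> neither the constant nor the factor \<open>2\<close> affects the \<open>liminf\<close>.
\<close>

lemma hausdorff_dist_commute: "hausdorff_dist S T = hausdorff_dist T S"
  unfolding hausdorff_dist_def by (simp add: max.commute)

lemma infdist_le_hausdorff_dist:
  fixes S T :: "'a::metric_space set"
  assumes "bounded S" "x \<in> S" "T \<noteq> {}"
  shows "infdist x T \<le> hausdorff_dist S T"
proof -
  obtain a r where r: "\<And>y. y \<in> S \<Longrightarrow> dist a y \<le> r"
    using assms(1) unfolding bounded_def by blast
  obtain t where t: "t \<in> T" using assms(3) by auto
  have "bdd_above ((\<lambda>y. infdist y T) ` S)"
  proof (rule bdd_aboveI2)
    fix y assume "y \<in> S"
    have "infdist y T \<le> dist a y + dist a t"
      using infdist_le[OF t, of y] dist_triangle3[of y t a] by linarith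
    then show "infdist y T \<le> r + dist a t" using r[OF \<open>y \<in> S\<close>] by linarith
  qed
  then have "infdist x T \<le> (SUP y\<in>S. infdist y T)" by (rule cSUP_upper[OF assms(2)])
  then show ?thesis unfolding hausdorff_dist_def by simp
qed

lemma infdist_le_hausdorff_dist_add:
  fixes S T C :: "'a::metric_space set"
  assumes "bounded S" "bounded C" "x \<in> S" "T \<noteq> {}" "C \<noteq> {}"
  shows "infdist x T \<le> hausdorff_dist S C + hausdorff_dist C T"
proof -
  have "infdist x T - hausdorff_dist C T \<le> dist x c" if "c \<in> C" for c
    using infdist_triangle[of x T c] infdist_le_hausdorff_dist[OF assms(2) that assms(4)]
    by linarith
  then have "infdist x T - hausdorff_dist C T \<le> infdist x C"
    using assms(5) by (simp add: infdist_notempty cINF_greatest)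
  also have "\<dots> \<le> hausdorff_dist S C"
    using infdist_le_hausdorff_dist[OF assms(1,3,5)] .
  finally show ?thesis by linarith
qed

lemma hausdorff_dist_le:
  fixes S T :: "'a::metric_space set"
  assumes "S \<noteq> {}" "T \<noteq> {}"
    and "\<forall>x\<in>S. \<exists>y\<in>T. dist x y \<le> e" "\<forall>y\<in>T. \<exists>x\<in>S. dist y x \<le> e"
  shows "hausdorff_dist S T \<le> e"
proof -
  have "(SUP x\<in>S. infdist x T) \<le> e"
    using assms(1,3) by (auto intro!: cSUP_least intro: infdist_le2)
  moreover have "(SUP y\<in>T. infdist y S) \<le> e"
    using assms(2,4) by (auto intro!: cSUP_least intro: infdist_le2)
  ultimately show ?thesis unfolding hausdorff_dist_def by simp
qed

lemma infdist_Union_split_family: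
  fixes \<F> :: "'a::metric_space set set"
  assumes split: "\<forall>B\<in>\<F>. \<forall>C\<in>\<F>. B \<noteq> C \<longrightarrow> eps_split \<epsilon> B C"
    and "B \<in> \<F>" "x \<in> B" "\<tau> \<subseteq> \<F>" "B \<notin> \<tau>" "finite \<tau>" "\<tau> \<noteq> {}" "{} \<notin> \<tau>"
  shows "\<epsilon> < infdist x (\<Union>\<tau>)"
proof -
  define \<delta> where "\<delta> = Min ((setdist B) ` \<tau>)"
  have "\<epsilon> < setdist B B'" if "B' \<in> \<tau>" for B'
  proof -
    have "B' \<in> \<F>" "B \<noteq> B'" using assms(4,5) that by auto
    then show ?thesis using split[rule_format, OF assms(2)] by (simp add: eps_split_def)
  qed
  then have "\<epsilon> < \<delta>" unfolding \<delta>_def using assms(6,7) by simp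
  also have "\<delta> \<le> setdist {x} (\<Union>\<tau>)"
  proof (rule le_setdistI)
    show "\<Union>\<tau> \<noteq> {}" using assms(7,8) by auto
    fix x' y assume "x' \<in> {x}" "y \<in> \<Union>\<tau>"
    then obtain B' where "B' \<in> \<tau>" "y \<in> B'" "x' = x" by blast
    then have "\<delta> \<le> setdist B B'" unfolding \<delta>_def using assms(6) by simp
    also have "\<dots> \<le> dist x' y" using setdist_le_dist[OF assms(3) \<open>y \<in> B'\<close>] \<open>x' = x\<close> by simp
    finally show "\<delta> \<le> dist x' y" .
  qed simp
  finally show ?thesis by (simp add: infdist_eq_setdist)
qed

lemma split_subfamily_Unions_not_close:
  fixes \<F> :: "'a::metric_space set set"
  assumes split: "\<forall>B\<in>\<F>. \<forall>C\<in>\<F>. B \<noteq> C \<longrightarrow> eps_split (2 * \<epsilon>) B C"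
    and "finite \<F>" "\<forall>B\<in>\<F>. B \<noteq> {} \<and> bounded B"
    and "\<sigma> \<subseteq> \<F>" "\<tau> \<subseteq> \<F>" "\<sigma> \<noteq> {}" "\<tau> \<noteq> {}" "\<sigma> \<noteq> \<tau>"
    and "bounded C" "C \<noteq> {}"
  shows "\<not> (hausdorff_dist (\<Union>\<sigma>) C \<le> \<epsilon> \<and> hausdorff_dist (\<Union>\<tau>) C \<le> \<epsilon>)"
proof -
  have False
    if sub: "\<sigma> \<subseteq> \<F>" "\<tau> \<subseteq> \<F>" "\<tau> \<noteq> {}" "B \<in> \<sigma>" "B \<notin> \<tau>"
      and close: "hausdorff_dist (\<Union>\<sigma>) C \<le> \<epsilon>" "hausdorff_dist (\<Union>\<tau>) C \<le> \<epsilon>" for \<sigma> \<tau> B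
  proof -
    have "B \<noteq> {}" using sub(1,4) assms(3) by auto
    then obtain x where x: "x \<in> B" by auto
    have "finite \<sigma>" "finite \<tau>" using sub(1,2) assms(2) by (auto intro: finite_subset)
    then have "bounded (\<Union>\<sigma>)" using sub(1) assms(3) by (auto intro!: bounded_Union)
    have "{} \<notin> \<tau>" using sub(2) assms(3) by auto
    then have "\<Union>\<tau> \<noteq> {}" using sub(3) by auto
    have "2 * \<epsilon> < infdist x (\<Union>\<tau>)"
      using infdist_Union_split_family[OF split _ x sub(2,5) \<open>finite \<tau>\<close> sub(3) \<open>{} \<notin> \<tau>\<close>] sub(1,4)
      by auto
    also have "\<dots> \<le> hausdorff_dist (\<Union>\<sigma>) C + hausdorff_dist C (\<Union>\<tau>)"
      using infdist_le_hausdorff_dist_add[OF \<open>bounded (\<Union>\<sigma>)\<close> assms(9) _ \<open>\<Union>\<tau> \<noteq> {}\<close> assms(10)]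
        sub(4) x by auto
    finally show False using close hausdorff_dist_commute[of C "\<Union>\<tau>"] by linarith
  qed
  moreover obtain B where "B \<in> \<sigma> \<and> B \<notin> \<tau> \<or> B \<in> \<tau> \<and> B \<notin> \<sigma>"
    using assms(8) by auto
  ultimately show ?thesis using assms(4-7) by auto
qed

lemma card_split_family_le_net:
  fixes N X :: "'a::metric_space set" and \<F> :: "'a set set"
  assumes "finite N" "X \<subseteq> (\<Union>y\<in>N. ball y (\<epsilon> / 2))"
    and "\<forall>B\<in>\<F>. B \<noteq> {} \<and> B \<subseteq> X"
    and split: "\<forall>B\<in>\<F>. \<forall>C\<in>\<F>. B \<noteq> C \<longrightarrow> eps_split \<epsilon> B C"
  shows "finite \<F>" "card \<F> \<le> card N"
proof -
  have "\<exists>y\<in>N. \<exists>x\<in>B. dist y x < \<epsilon> / 2" if B: "B \<in> \<F>" for B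
  proof -
    obtain x where "x \<in> B" "x \<in> X" using assms(3) B by auto
    moreover obtain y where "y \<in> N" "x \<in> ball y (\<epsilon> / 2)" using \<open>x \<in> X\<close> assms(2) by blast
    ultimately show ?thesis by (metis mem_ball)
  qed
  then obtain c where c: "\<And>B. B \<in> \<F> \<Longrightarrow> c B \<in> N \<and> (\<exists>x\<in>B. dist (c B) x < \<epsilon> / 2)"
    by metis
  have "inj_on c \<F>"
  proof (rule inj_onI, rule ccontr)
    fix B C assume BC: "B \<in> \<F>" "C \<in> \<F>" "c B = c C" "B \<noteq> C"
    obtain x y where "x \<in> B" "y \<in> C" "dist (c B) x < \<epsilon> / 2" "dist (c B) y < \<epsilon> / 2"
      using c[OF BC(1)] c[OF BC(2)] BC(3) by auto
    then have "setdist B C < \<epsilon>"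
      using setdist_le_dist[of x B y C] dist_triangle3[of x y "c B"] by linarith
    then show False using split[rule_format, OF BC(1,2,4)] by (simp add: eps_split_def)
  qed
  moreover have "c ` \<F> \<subseteq> N" using c by auto
  ultimately show "finite \<F>" "card \<F> \<le> card N"
    using assms(1) finite_imageD finite_subset card_inj_on_le by metis+
qed

lemma split_number_attained:
  fixes X :: "'a::metric_space set"
  assumes "compact X" "\<A> \<subseteq> Kset X" "\<A> \<noteq> {}" "\<epsilon> > 0"
  obtains \<F> where "finite \<F>" "\<F> \<subseteq> \<A>" "\<forall>B\<in>\<F>. \<forall>C\<in>\<F>. B \<noteq> C \<longrightarrow> eps_split \<epsilon> B C"
    "card \<F> = split_number \<A> \<epsilon>" "split_number \<A> \<epsilon> \<ge> 1"
proof -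
  define S where "S = {card \<F> | \<F>. finite \<F> \<and> \<F> \<subseteq> \<A> \<and>
      (\<forall>B\<in>\<F>. \<forall>C\<in>\<F>. B \<noteq> C \<longrightarrow> eps_split \<epsilon> B C)}"
  obtain N where N: "finite N" "X \<subseteq> (\<Union>y\<in>N. ball y (\<epsilon> / 2))"
    using seq_compact_imp_totally_bounded[OF compact_imp_seq_compact[OF assms(1)]] assms(4)
    by (meson half_gt_zero)
  have "bdd_above S"
  proof (rule bdd_aboveI)
    fix k assume "k \<in> S"
    then obtain \<F> where \<F>: "k = card \<F>" "\<F> \<subseteq> \<A>"
      "\<forall>B\<in>\<F>. \<forall>C\<in>\<F>. B \<noteq> C \<longrightarrow> eps_split \<epsilon> B C"
      unfolding S_def by auto
    moreover have "\<forall>B\<in>\<F>. B \<noteq> {} \<and> B \<subseteq> X" using \<F>(2) assms(2) by (auto simp: Kset_def)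
    ultimately show "k \<le> card N" using card_split_family_le_net(2)[OF N] by simp
  qed
  then have "finite S" by (rule bdd_above_nat[THEN iffD1])
  obtain A where "A \<in> \<A>" using assms(3) by auto
  then have "1 \<in> S" unfolding S_def by (auto intro!: exI[of _ "{A}"])
  then have "S \<noteq> {}" by auto
  then have "Sup S \<in> S" using \<open>finite S\<close> by (simp add: cSup_eq_Max)
  moreover have "1 \<le> Sup S" using cSup_upper[OF \<open>1 \<in> S\<close> \<open>bdd_above S\<close>] .
  moreover have "split_number \<A> \<epsilon> = Sup S" unfolding split_number_def S_def ..
  moreover obtain \<F> where "Sup S = card \<F>" "finite \<F>" "\<F> \<subseteq> \<A>"
    "\<forall>B\<in>\<F>. \<forall>C\<in>\<F>. B \<noteq> C \<longrightarrow> eps_split \<epsilon> B C"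
    using \<open>Sup S \<in> S\<close> unfolding S_def by auto
  ultimately show ?thesis using that[of \<F>] by simp
qed

lemma finite_union_property_Union:
  assumes "finite_union_property \<A>" "finite \<S>" "\<S> \<noteq> {}" "\<S> \<subseteq> \<A>"
  shows "\<Union>\<S> \<in> \<A>"
  using assms(2-4)
proof (induction \<S> rule: finite_ne_induct)
  case (insert B \<S>)
  then show ?case using assms(1) by (simp add: finite_union_property_def)
qed simp

lemma Kset_finite_hausdorff_cover:
  fixes X :: "'a::metric_space set"
  assumes "compact X" "\<epsilon> > 0"
  obtains E where "finite E" "E \<subseteq> Kset X" "Kset X \<subseteq> (\<Union>C\<in>E. {S. hausdorff_dist S C \<le> \<epsilon>})"
proof -
  obtain N where N: "finite N" "N \<subseteq> X" "X \<subseteq> (\<Union>y\<in>N. ball y \<epsilon>)"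
    using seq_compact_imp_totally_bounded[OF compact_imp_seq_compact[OF assms(1)]] assms(2)
    by meson
  define c where "c S = {y\<in>N. \<exists>x\<in>S. dist y x < \<epsilon>}" for S
  have near: "\<exists>y\<in>c S. dist x y \<le> \<epsilon>" if "x \<in> S" "S \<in> Kset X" for x S
  proof -
    have "x \<in> X" using that by (auto simp: Kset_def)
    then obtain y where y: "y \<in> N" "dist y x < \<epsilon>" using N(3) by auto
    then have "y \<in> c S" unfolding c_def using that(1) by auto
    then show ?thesis using y(2) by (auto simp: dist_commute intro!: bexI[of _ y])
  qed
  have c_Kset: "c S \<in> Kset X" if S: "S \<in> Kset X" for S
  proof -
    obtain x where "x \<in> S" using S by (auto simp: Kset_def)
    then have "c S \<noteq> {}" using near[OF _ S] by auto
    moreover have "finite (c S)" using N(1) unfolding c_def by auto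
    ultimately show ?thesis using N(2) unfolding Kset_def c_def by (auto intro: finite_imp_closed)
  qed
  show ?thesis
  proof (rule that[of "c ` Kset X"])
    show "finite (c ` Kset X)"
      using N(1) by (rule finite_subset[rotated, OF finite_Pow_iff[THEN iffD2]]) (auto simp: c_def)
    show "c ` Kset X \<subseteq> Kset X" using c_Kset by auto
    show "Kset X \<subseteq> (\<Union>C\<in>c ` Kset X. {S. hausdorff_dist S C \<le> \<epsilon>})"
    proof
      fix S assume S: "S \<in> Kset X"
      have "hausdorff_dist S (c S) \<le> \<epsilon>"
      proof (rule hausdorff_dist_le)
        show "S \<noteq> {}" "c S \<noteq> {}" using S c_Kset[OF S] by (auto simp: Kset_def)
        show "\<forall>x\<in>S. \<exists>y\<in>c S. dist x y \<le> \<epsilon>" using near S by auto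
        show "\<forall>y\<in>c S. \<exists>x\<in>S. dist y x \<le> \<epsilon>" unfolding c_def by force
      qed
      then show "S \<in> (\<Union>C\<in>c ` Kset X. {S. hausdorff_dist S C \<le> \<epsilon>})" using S by auto
    qed
  qed
qed

lemma card_le_covering_number:
  fixes X :: "'a::metric_space set"
  assumes "compact X" "\<epsilon> > 0" "\<A> \<subseteq> Kset X" "S ` I \<subseteq> \<A>"
    and separated: "\<And>i j C. i \<in> I \<Longrightarrow> j \<in> I \<Longrightarrow> C \<in> Kset X \<Longrightarrow>
      hausdorff_dist (S i) C \<le> \<epsilon> \<Longrightarrow> hausdorff_dist (S j) C \<le> \<epsilon> \<Longrightarrow> i = j"
  shows "card I \<le> covering_number X \<A> \<epsilon>"
  unfolding covering_number_def
proof (rule cInf_greatest)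
  obtain E where "finite E" "E \<subseteq> Kset X" "Kset X \<subseteq> (\<Union>C\<in>E. {S. hausdorff_dist S C \<le> \<epsilon>})"
    using Kset_finite_hausdorff_cover[OF assms(1,2)] .
  moreover from this(3) have "\<A> \<subseteq> (\<Union>C\<in>E. {S. hausdorff_dist S C \<le> \<epsilon>})"
    using assms(3) by (rule order_trans[rotated])
  ultimately show "{card E |E. finite E \<and> E \<subseteq> Kset X \<and> \<A> \<subseteq> (\<Union>C\<in>E. {S. hausdorff_dist S C \<le> \<epsilon>})} \<noteq> {}"
    by auto
next
  fix k assume "k \<in> {card E |E. finite E \<and> E \<subseteq> Kset X \<and> \<A> \<subseteq> (\<Union>C\<in>E. {S. hausdorff_dist S C \<le> \<epsilon>})}"
  then obtain E where E: "k = card E" "finite E" "E \<subseteq> Kset X"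
    "\<A> \<subseteq> (\<Union>C\<in>E. {S. hausdorff_dist S C \<le> \<epsilon>})" by auto
  have "\<forall>i\<in>I. \<exists>C\<in>E. hausdorff_dist (S i) C \<le> \<epsilon>" using E(4) assms(4) by auto
  then obtain g where g: "\<And>i. i \<in> I \<Longrightarrow> g i \<in> E \<and> hausdorff_dist (S i) (g i) \<le> \<epsilon>"
    by metis
  have "inj_on g I"
  proof (rule inj_onI)
    fix i j assume "i \<in> I" "j \<in> I" "g i = g j"
    then show "i = j" using separated[of i j "g i"] g[of i] g[of j] E(3) by auto
  qed
  moreover have "g ` I \<subseteq> E" using g by auto
  ultimately show "card I \<le> k" using card_inj_on_le[OF _ _ E(2)] E(1) by simp
qed

lemma covering_number_ge_split_number:
  fixes X :: "'a::metric_space set"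
  assumes "compact X" "\<A> \<subseteq> Kset X" "\<A> \<noteq> {}" "finite_union_property \<A>" "\<epsilon> > 0"
  shows "2 ^ split_number \<A> (2 * \<epsilon>) - 1 \<le> covering_number X \<A> \<epsilon>"
proof -
  obtain \<F> where \<F>: "finite \<F>" "\<F> \<subseteq> \<A>"
    and split: "\<forall>B\<in>\<F>. \<forall>C\<in>\<F>. B \<noteq> C \<longrightarrow> eps_split (2 * \<epsilon>) B C"
    and card: "card \<F> = split_number \<A> (2 * \<epsilon>)"
    using split_number_attained[OF assms(1-3)] assms(5) by (metis mult_pos_pos zero_less_numeral)
  have elems: "\<forall>B\<in>\<F>. B \<noteq> {} \<and> bounded B"
    using \<F>(2) assms(2) compact_imp_bounded[OF assms(1)] by (auto simp: Kset_def intro: bounded_subset)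
  have "card (Pow \<F> - {{}}) \<le> covering_number X \<A> \<epsilon>"
  proof (rule card_le_covering_number[OF assms(1,5,2)])
    show "Union ` (Pow \<F> - {{}}) \<subseteq> \<A>"
      using finite_union_property_Union[OF assms(4)] \<F> by (auto intro: finite_subset)
    fix \<sigma> \<tau> C assume "\<sigma> \<in> Pow \<F> - {{}}" "\<tau> \<in> Pow \<F> - {{}}" "C \<in> Kset X"
      and "hausdorff_dist (\<Union>\<sigma>) C \<le> \<epsilon>" "hausdorff_dist (\<Union>\<tau>) C \<le> \<epsilon>"
    then show "\<sigma> = \<tau>"
      using split_subfamily_Unions_not_close[OF split \<F>(1) elems, of \<sigma> \<tau> C]
        compact_imp_bounded[OF assms(1)] by (auto simp: Kset_def intro: bounded_subset)
  qed
  moreover have "card (Pow \<F> - {{}}) = 2 ^ card \<F> - 1"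
    using \<F>(1) by (simp add: card_Diff_singleton card_Pow)
  ultimately show ?thesis using card by simp
qed

lemma ln_ln_ge_of_pow2_le:
  fixes m N :: nat
  assumes "m \<ge> 1" "2 ^ m - 1 \<le> N"
  shows "ln (real m) + ln (ln 2 / 2) \<le> ln (ln (real N))"
proof (cases "N \<ge> 2")
  case True
  have "(2::nat) ^ (m - 1) \<le> 2 ^ m - 1"
    using assms(1) by (cases m) auto
  then have "real (2 ^ (m - 1)) \<le> real N" using assms(2) by linarith
  then have "ln (2 ^ (m - 1)) \<le> ln (real N)" by (intro ln_mono) auto
  then have "real (m - 1) * ln 2 \<le> ln (real N)" by (simp add: ln_realpow)
  moreover have "ln 2 \<le> ln (real N)" using True by simp
  ultimately have "max (real (m - 1) * ln 2) (ln 2) \<le> ln (real N)" by simp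
  moreover have "real m / 2 * ln 2 \<le> max (real (m - 1) * ln 2) (ln 2)"
  proof (cases "m = 1")
    case False
    then have "real m / 2 \<le> real (m - 1)" using assms(1) by (simp add: of_nat_diff)
    then have "real m / 2 * ln 2 \<le> real (m - 1) * ln 2" by (simp add: mult_right_mono)
    then show ?thesis by (rule max.coboundedI1)
  qed simp
  ultimately have "real m / 2 * ln 2 \<le> ln (real N)" by linarith
  moreover have "0 < real m / 2 * ln 2" using assms(1) by simp
  ultimately have "ln (real m / 2 * ln 2) \<le> ln (ln (real N))" by simp
  then show ?thesis using assms(1) by (simp add: ln_mult ln_div)
next
  case False
  then have "2 ^ m \<le> (2::nat) ^ 1" using assms(2) by simp
  then have "m = 1" using assms(1) by (subst (asm) power_increasing_iff) auto
  moreover have "N = 0 \<or> N = 1" using False by auto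
  \<comment> \<open>\<open>ln 0 = 0\<close> in Isabelle/HOL, so \<open>ln (ln N)\<close> vanishes for \<open>N \<le> 1\<close>.\<close>
  then have "ln (ln (real N)) = 0" by auto
  ultimately show ?thesis using ln_2_less_1 by simp
qed

lemma eventually_at_right_0_double:
  assumes "\<forall>\<^sub>F t in at_right 0. P t"
  shows "\<forall>\<^sub>F t in at_right 0. P (2 * t :: real)"
proof -
  have "filterlim (\<lambda>t. 2 * t) (at_right 0) (at_right (0::real))"
    by (rule filterlim_at_withinI) (auto intro!: tendsto_eq_intros simp: eventually_at_right_less)
  with assms show ?thesis by (rule eventually_compose_filterlim)
qed

lemma Liminf_ln_ratio_mono:
  fixes a b :: "real \<Rightarrow> real"
  assumes le: "\<And>t. t > 0 \<Longrightarrow> a (2 * t) + K \<le> b t"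
  shows "Liminf (at_right 0) (\<lambda>\<epsilon>. ereal (a \<epsilon> / - ln \<epsilon>))
    \<le> Liminf (at_right 0) (\<lambda>\<epsilon>. ereal (b \<epsilon> / - ln \<epsilon>))"
proof (rule le_Liminf_iff[THEN iffD2], intro allI impI)
  fix y assume y: "y < Liminf (at_right 0) (\<lambda>\<epsilon>. ereal (a \<epsilon> / - ln \<epsilon>))"
  then obtain z where yz: "y < ereal z" and z: "ereal z < Liminf (at_right 0) (\<lambda>\<epsilon>. ereal (a \<epsilon> / - ln \<epsilon>))"
    using ereal_dense2 by blast
  show "\<forall>\<^sub>F t in at_right 0. y < ereal (b t / - ln t)"
  proof (cases y)
    case MInf
    then show ?thesis by simp
  next
    case PInf
    then show ?thesis using y by simp
  next
    case (real y')
    \<comment> \<open>Once \<open>- ln t > R\<close>, the gap \<open>z - y'\<close> absorbs the loss \<open>z * ln 2 - K\<close> caused by rescaling.\<close>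
    define R where "R = (z * ln 2 - K) / (z - y')"
    have "\<forall>\<^sub>F t in at_right 0. z < a t / - ln t"
      using less_LiminfD[OF z] by simp
    then have "\<forall>\<^sub>F t in at_right 0. z < a (2 * t) / - ln (2 * t)"
      by (rule eventually_at_right_0_double)
    moreover have "\<forall>\<^sub>F t in at_right 0. R < - ln t"
      using ln_at_0[unfolded filterlim_uminus_at_bot, unfolded filterlim_at_top_dense] by blast
    moreover have "\<forall>\<^sub>F t in at_right 0. 2 * t < (1::real)"
      unfolding eventually_at_right_field by (intro exI[of _ "1/2"]) auto
    moreover have "\<forall>\<^sub>F t in at_right 0. t > (0::real)"
      by (simp add: eventually_at_right_less)
    ultimately show ?thesis
    proof eventually_elim
      case (elim t)
      define L where "L = - ln t"
      have "- ln (2 * t) > 0" using elim by (simp add: ln_less_zero)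
      then have "z * (L - ln 2) < a (2 * t)"
        using elim(1) \<open>t > 0\<close> by (simp add: L_def ln_mult pos_less_divide_eq algebra_simps)
      moreover have "z - y' > 0" using yz real by simp
      then have "(z - y') * L > z * ln 2 - K"
        using elim(2) by (simp add: R_def L_def divide_less_eq mult.commute)
      ultimately have "y' * L < b t"
        using le[OF \<open>t > 0\<close>] by (simp add: algebra_simps)
      moreover have "L > 0" using elim by (simp add: L_def)
      ultimately have "y' < b t / L" by (simp add: less_divide_eq)
      then show ?case using real by (simp add: L_def)
    qed
  qed
qed

theorem lemma4p6:
  fixes X :: "'a::metric_space set" and \<A> :: "'a set set"
  assumes "compact X" and "\<A> \<subseteq> Kset X" and "\<A> \<noteq> {}"
    and "finite_union_property \<A>"
  shows "lower_mo X \<A> \<ge>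
    Liminf (at_right 0) (\<lambda>\<epsilon>. ereal (ln (real (split_number \<A> \<epsilon>)) / (- ln \<epsilon>)))"
proof -
  have "ln (real (split_number \<A> (2 * t))) + ln (ln 2 / 2) \<le> ln (ln (real (covering_number X \<A> t)))"
    if "t > 0" for t
  proof -
    have "split_number \<A> (2 * t) \<ge> 1"
      using split_number_attained[OF assms(1-3), of "2 * t"] that by auto
    then show ?thesis
      using covering_number_ge_split_number[OF assms that] by (rule ln_ln_ge_of_pow2_le)
  qed
  then show ?thesis
    unfolding lower_mo_def
    by (rule Liminf_ln_ratio_mono[where a = "\<lambda>\<epsilon>. ln (real (split_number \<A> \<epsilon>))"
          and b = "\<lambda>\<epsilon>. ln (ln (real (covering_number X \<A> \<epsilon>)))"])
qed

end
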